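(* Let $a_1,\dots,a_n$ be pairwise distinct letters and let $\mathcal{G}=(N,T,P,S)$ be a context-free grammar in which every nonterminal is productive, every production has the form $A\to BC$, $A\to a_i$ or $A\to\varepsilon$ ($A,B,C\in N$), and $L(\mathcal{G})\subseteq a_1^*a_2^*\cdots a_n^*$. Let $\mathcal{G}'$ be obtained from $\mathcal{G}$ by adding the production $A\to\varepsilon$ for every $A\in N$. For $i\in[1,n]$ let $L_i=\{A\in N\mid A\Rightarrow^*_{\mathcal{G}'} a_iA\}$ and $R_i=\{A\in N\mid A\Rightarrow^*_{\mathcal{G}'} Aa_i\}$. Let $\mathcal{G}^\omega$ be the grammar over the new terminal letters $a_1^\omega,\dots,a_n^\omega$ obtained from $\mathcal{G}'$ by (i) removing all productions $A\to a_i$, (ii) adding $A\to a_i^\omega A$ for each $A\in L_i$, and (iii) adding $A\to A a_i^\omega$ for each $A\in R_i$. Then $a_1^\omega a_2^\omega\cdots a_n^\omega\in L(\mathcal{G}^\omega)$ if and only if $a_1^*a_2^*\cdots a_n^*\subseteq\downarrow L(\mathcal{G})$.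
   Context: $\downarrow L$ denotes the set of all (not necessarily contiguous) subwords of words in $L$. $A\Rightarrow^*_{\mathcal{G}'}w$ means that the sentential form $w\in(N\cup T)^*$ is derivable from $A$ in $\mathcal{G}'$. A nonterminal is productive if it derives some terminal word. *)

theory Defs
  imports Main "HOL-Library.Sublist"
begin

datatype ('n, 't) sym = Nt 'n | Tm 't

type_synonym ('n, 't) prod = "'n \<times> ('n, 't) sym list"

definition derive1 :: "('n, 't) prod set \<Rightarrow> ('n, 't) sym list \<Rightarrow> ('n, 't) sym list \<Rightarrow> bool" where
  "derive1 P u v \<longleftrightarrow> (\<exists>x y A rhs. (A, rhs) \<in> P \<and> u = x @ [Nt A] @ y \<and> v = x @ rhs @ y)"

definition derives :: "('n, 't) prod set \<Rightarrow> ('n, 't) sym list \<Rightarrow> ('n, 't) sym list \<Rightarrow> bool" where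
  "derives P = (derive1 P)\<^sup>*\<^sup>*"

definition Lang :: "('n, 't) prod set \<Rightarrow> 'n \<Rightarrow> 't list set" where
  "Lang P S = {w. derives P [Nt S] (map Tm w)}"

definition productive :: "('n, 't) prod set \<Rightarrow> 'n \<Rightarrow> bool" where
  "productive P A \<longleftrightarrow> (\<exists>w. derives P [Nt A] (map Tm w))"

definition star_concat :: "'t list \<Rightarrow> 't list set" where
  "star_concat as = {w. \<exists>ks. length ks = length as \<and> w = concat (map2 (\<lambda>a k. replicate k a) as ks)}"

definition down_closure :: "'t list set \<Rightarrow> 't list set" where
  "down_closure L = {u. \<exists>w\<in>L. subseq u w}"

definition eps_closure_grammar :: "'n set \<Rightarrow> ('n, 't) prod set \<Rightarrow> ('n, 't) prod set" where
  "eps_closure_grammar N P = P \<union> {(A, []) | A. A \<in> N}"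

text \<open>L_i and R_i (letter a_i = as ! i, 0-based index i).\<close>
definition Lset :: "'n set \<Rightarrow> ('n, 't) prod set \<Rightarrow> 't list \<Rightarrow> nat \<Rightarrow> 'n set" where
  "Lset N P as i = {A \<in> N. derives (eps_closure_grammar N P) [Nt A] [Tm (as ! i), Nt A]}"

definition Rset :: "'n set \<Rightarrow> ('n, 't) prod set \<Rightarrow> 't list \<Rightarrow> nat \<Rightarrow> 'n set" where
  "Rset N P as i = {A \<in> N. derives (eps_closure_grammar N P) [Nt A] [Nt A, Tm (as ! i)]}"

text \<open>G^omega over the new terminal alphabet: the letter a_i^omega is represented
by the index i (type nat).\<close>
definition omega_grammar :: "'n set \<Rightarrow> ('n, 't) prod set \<Rightarrow> 't list \<Rightarrow> ('n, nat) prod set" where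
  "omega_grammar N P as =
     {(A, map Nt Bs) | A Bs. (A, map Nt Bs) \<in> eps_closure_grammar N P}
     \<union> {(A, [Tm i, Nt A]) | A i. i < length as \<and> A \<in> Lset N P as i}
     \<union> {(A, [Nt A, Tm i]) | A i. i < length as \<and> A \<in> Rset N P as i}"

end

theory Submission
  imports Defs
begin

text \<open>
  G' generates exactly the downward closure of L(G): its \<epsilon>-rules only erase subtrees, and
  as every nonterminal is productive an erased subtree can be replaced by a terminal one.
  Substituting the block a_i^k_i for every a_i^\<omega> turns derivations of G^\<omega> into
  derivations of G', so a_1^\<omega> ... a_n^\<omega> \<in> L(G^\<omega>) puts all of a_1^* ... a_n^* into L(G').

  Conversely, take a derivation tree in G' of a_1^M ... a_n^M for a huge M and show by
  induction on d that a node whose yield contains d consecutive long blocks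
  a_i^m_i ... a_(i+d-1)^m_(i+d-1) derives a_i^\<omega> ... a_(i+d-1)^\<omega> in G^\<omega>. Descend to the
  node A \<rightarrow> B C at which this factor is cut between the two children. A cut inside an
  inner block leaves each child fewer blocks, each at least half as long. A cut inside the
  first block with its larger part in C gives A \<Rightarrow>* a_i C; then A is recorded and the
  descent continues in C. Once a recorded nonterminal is reached again it lies in L_i, and
  A \<rightarrow> a_i^\<omega> A consumes the whole first block (symmetrically for the last block and R_i).
  Every recorded nonterminal halves a block once, so blocks of length (2 * 4^|N|)^d suffice.
\<close>

lemma derives_refl [simp]: "derives P u u"
  by (simp add: derives_def)

lemma derives_trans [trans]: "derives P u v \<Longrightarrow> derives P v w \<Longrightarrow> derives P u w"
  by (simp add: derives_def)

lemma derives_prod: "(A, rhs) \<in> P \<Longrightarrow> derives P [Nt A] rhs"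
  unfolding derives_def derive1_def by (intro r_into_rtranclp) (metis append_Nil append_Nil2)

lemma derives_context: "derives P u v \<Longrightarrow> derives P (l @ u @ r) (l @ v @ r)"
  unfolding derives_def
proof (induction rule: rtranclp_induct)
  case (step v w)
  from \<open>derive1 P v w\<close> have "derive1 P (l @ v @ r) (l @ w @ r)"
    unfolding derive1_def by (metis append.assoc)
  with step.IH show ?case by (rule rtranclp.rtrancl_into_rtrancl)
qed simp

lemma derives_append: "derives P u u' \<Longrightarrow> derives P v v' \<Longrightarrow> derives P (u @ v) (u' @ v')"
  by (metis append_Nil append_Nil2 derives_context derives_trans)

lemma derives_drop_right:
  assumes "(A, [Nt B, Nt C]) \<in> P" and "(C, []) \<in> P"
  shows "derives P [Nt A] [Nt B]"
proof -
  have "derives P [Nt A] ([Nt B] @ [Nt C] @ [])" using assms(1) by (simp add: derives_prod)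
  also have "derives P \<dots> ([Nt B] @ [] @ [])" using derives_prod[OF assms(2)] by (rule derives_context)
  finally show ?thesis by simp
qed

lemma derives_drop_left:
  assumes "(A, [Nt B, Nt C]) \<in> P" and "(B, []) \<in> P"
  shows "derives P [Nt A] [Nt C]"
proof -
  have "derives P [Nt A] ([] @ [Nt B] @ [Nt C])" using assms(1) by (simp add: derives_prod)
  also have "derives P \<dots> ([] @ [] @ [Nt C])" using derives_prod[OF assms(2)] by (rule derives_context)
  finally show ?thesis by simp
qed

lemma derives_left_loop_power:
  assumes "derives P [Nt A] [Tm a, Nt A]"
  shows "derives P [Nt A] (replicate k (Tm a) @ [Nt A])"
proof (induction k)
  case (Suc k)
  have "derives P [Nt A] ([Tm a] @ [Nt A] @ [])" using assms by simp
  also have "derives P \<dots> ([Tm a] @ (replicate k (Tm a) @ [Nt A]) @ [])"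
    using Suc.IH by (rule derives_context)
  finally show ?case by simp
qed simp

lemma derives_right_loop_power:
  assumes "derives P [Nt A] [Nt A, Tm a]"
  shows "derives P [Nt A] (Nt A # replicate k (Tm a))"
proof (induction k)
  case (Suc k)
  have "derives P [Nt A] ([] @ [Nt A] @ [Tm a])" using assms by simp
  also have "derives P \<dots> ([] @ (Nt A # replicate k (Tm a)) @ [Tm a])"
    using Suc.IH by (rule derives_context)
  finally show ?case by (simp add: replicate_append_same)
qed simp

section \<open>Derivation trees of grammars in binary form\<close>

inductive generates :: "('n, 't) prod set \<Rightarrow> 'n \<Rightarrow> 't list \<Rightarrow> bool" for P where
  generates_eps: "(A, []) \<in> P \<Longrightarrow> generates P A []"
| generates_tm: "(A, [Tm a]) \<in> P \<Longrightarrow> generates P A [a]"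
| generates_bin: "(A, [Nt B, Nt C]) \<in> P \<Longrightarrow> generates P B u \<Longrightarrow> generates P C v \<Longrightarrow>
    generates P A (u @ v)"

lemma generates_imp_derives: "generates P A w \<Longrightarrow> derives P [Nt A] (map Tm w)"
proof (induction rule: generates.induct)
  case (generates_bin A B C u v)
  have "derives P [Nt A] ([Nt B] @ [Nt C])" using generates_bin.hyps(1) by (simp add: derives_prod)
  also have "derives P \<dots> (map Tm u @ map Tm v)" using generates_bin.IH by (rule derives_append)
  finally show ?case by simp
qed (simp_all add: derives_prod)

lemma generates_mono: "generates P A w \<Longrightarrow> P \<subseteq> Q \<Longrightarrow> generates Q A w"
  by (induction rule: generates.induct) (auto intro: generates.intros)

definition binary_form :: "('n, 't) prod set \<Rightarrow> bool" where
  "binary_form P \<longleftrightarrow> (\<forall>(A, rhs) \<in> P. (\<exists>B C. rhs = [Nt B, Nt C]) \<or> (\<exists>a. rhs = [Tm a]) \<or> rhs = [])"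

fun generates_list :: "('n, 't) prod set \<Rightarrow> ('n, 't) sym list \<Rightarrow> 't list \<Rightarrow> bool" where
  "generates_list P [] w \<longleftrightarrow> w = []"
| "generates_list P (Nt A # xs) w \<longleftrightarrow> (\<exists>u v. w = u @ v \<and> generates P A u \<and> generates_list P xs v)"
| "generates_list P (Tm a # xs) w \<longleftrightarrow> (\<exists>v. w = a # v \<and> generates_list P xs v)"

lemma generates_list_append:
  "generates_list P (xs @ ys) w \<longleftrightarrow> (\<exists>u v. w = u @ v \<and> generates_list P xs u \<and> generates_list P ys v)"
proof (induction xs arbitrary: w)
  case (Cons x xs)
  then show ?case by (cases x) (simp_all, metis append.assoc, metis append_Cons)
qed simp

lemma generates_list_map_Tm [simp]: "generates_list P (map Tm u) w \<longleftrightarrow> w = u"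
  by (induction u arbitrary: w) auto

lemma generates_list_production:
  assumes "binary_form P" and "(A, rhs) \<in> P" and "generates_list P rhs w"
  shows "generates P A w"
proof -
  from assms(1,2) consider B C where "rhs = [Nt B, Nt C]" | a where "rhs = [Tm a]" | "rhs = []"
    unfolding binary_form_def by fast
  then show ?thesis using assms(2,3) by cases (auto intro: generates.intros)
qed

lemma derive1_generates_list:
  assumes "binary_form P" and "derive1 P u v" and "generates_list P v w"
  shows "generates_list P u w"
proof -
  obtain l A rhs r where "(A, rhs) \<in> P" "u = l @ [Nt A] @ r" "v = l @ rhs @ r"
    using assms(2) unfolding derive1_def by blast
  with assms(1,3) show ?thesis
    by (fastforce simp: generates_list_append intro: generates_list_production)
qed

lemma derives_iff_generates:
  assumes "binary_form P"
  shows "derives P [Nt A] (map Tm w) \<longleftrightarrow> generates P A w"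
proof
  assume "derives P [Nt A] (map Tm w)"
  then have "generates_list P [Nt A] w"
    unfolding derives_def
    by (induction rule: converse_rtranclp_induct) (auto intro: derive1_generates_list[OF assms])
  then show "generates P A w" by simp
qed (rule generates_imp_derives)

lemma Lang_iff_generates: "binary_form P \<Longrightarrow> w \<in> Lang P S \<longleftrightarrow> generates P S w"
  by (simp add: Lang_def derives_iff_generates)

section \<open>Blocks a_i^k_i ... a_j^k_j\<close>

fun blocks :: "'t list \<Rightarrow> nat \<Rightarrow> nat list \<Rightarrow> 't list" where
  "blocks as i [] = []"
| "blocks as i (k # ks) = replicate k (as ! i) @ blocks as (Suc i) ks"

lemma blocks_append: "blocks as i (ks @ ls) = blocks as i ks @ blocks as (i + length ks) ls"
  by (induction ks arbitrary: i) auto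

lemma blocks_Cons_Suc: "blocks (a # as) (Suc i) ks = blocks as i ks"
  by (induction ks arbitrary: i) auto

lemma star_concat_blocks: "star_concat as = {blocks as 0 ks | ks. length ks = length as}"
proof -
  have "concat (map2 (\<lambda>a k. replicate k a) as ks) = blocks as 0 ks" if "length ks = length as" for ks
    using that by (induction ks as rule: list_induct2) (simp_all add: blocks_Cons_Suc)
  then show ?thesis unfolding star_concat_def by auto
qed

lemma blocks_cut:
  assumes "blocks as i ms = z1 @ z2" and "z2 \<noteq> []"
  shows "\<exists>ms1 p q ms2. ms = ms1 @ (p + q) # ms2 \<and>
    z1 = blocks as i (ms1 @ [p]) \<and> z2 = blocks as (i + length ms1) (q # ms2)"
  using assms
proof (induction ms arbitrary: i z1)
  case (Cons m ms)
  show ?case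
  proof (cases "length z1 \<le> m")
    case True
    have "replicate m (as ! i) = replicate (length z1) (as ! i) @ replicate (m - length z1) (as ! i)"
      using True by (metis le_add_diff_inverse replicate_add)
    with Cons.prems(1) True have "z1 = replicate (length z1) (as ! i)"
      and "z2 = replicate (m - length z1) (as ! i) @ blocks as (Suc i) ms"
      by (auto simp: append_eq_append_conv_if)
    with True show ?thesis
      by (intro exI[of _ "[]"] exI[of _ "length z1"] exI[of _ "m - length z1"] exI[of _ ms]) auto
  next
    case False
    with Cons.prems(1) obtain z1' where "z1 = replicate m (as ! i) @ z1'"
      and "blocks as (Suc i) ms = z1' @ z2"
      by (auto simp: append_eq_append_conv_if) (metis append_take_drop_id)
    with Cons.IH Cons.prems(2) show ?thesis
      by (fastforce intro: exI[of _ "m # ms1" for ms1])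
  qed
qed simp

section \<open>From derivations of G^\<omega> to derivations of G'\<close>

definition expand_omega :: "'t list \<Rightarrow> nat list \<Rightarrow> ('n, nat) sym \<Rightarrow> ('n, 't) sym list" where
  "expand_omega as ks s = (case s of Nt A \<Rightarrow> [Nt A] | Tm i \<Rightarrow> replicate (ks ! i) (Tm (as ! i)))"

lemma expand_omega_upt:
  "concat (map (expand_omega as ks \<circ> Tm) [i..<j]) = map Tm (blocks as i (map ((!) ks) [i..<j]))"
  by (induction j) (auto simp: blocks_append expand_omega_def)

lemma omega_production_expands:
  assumes "(A, rhs) \<in> omega_grammar N P as"
  shows "derives (eps_closure_grammar N P) [Nt A] (concat (map (expand_omega as ks) rhs))"
proof -
  from assms consider Bs where "rhs = map Nt Bs" "(A, map Nt Bs) \<in> eps_closure_grammar N P"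
    | i where "rhs = [Tm i, Nt A]" "A \<in> Lset N P as i"
    | i where "rhs = [Nt A, Tm i]" "A \<in> Rset N P as i"
    unfolding omega_grammar_def by blast
  then show ?thesis
  proof cases
    case (1 Bs)
    moreover have "concat (map (expand_omega as ks) (map Nt Bs)) = map Nt Bs"
      by (induction Bs) (auto simp: expand_omega_def)
    ultimately show ?thesis by (simp add: derives_prod)
  next
    case (2 i)
    then show ?thesis
      by (simp add: expand_omega_def Lset_def derives_left_loop_power)
  next
    case (3 i)
    then show ?thesis
      by (simp add: expand_omega_def Rset_def derives_right_loop_power)
  qed
qed

lemma derives_omega_expand:
  "derives (omega_grammar N P as) u v \<Longrightarrow>
   derives (eps_closure_grammar N P) (concat (map (expand_omega as ks) u)) (concat (map (expand_omega as ks) v))"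
  unfolding derives_def[of "omega_grammar N P as"]
proof (induction rule: rtranclp_induct)
  case (step v w)
  then obtain l A rhs r where "(A, rhs) \<in> omega_grammar N P as" "v = l @ [Nt A] @ r" "w = l @ rhs @ r"
    unfolding derive1_def by blast
  then have "derives (eps_closure_grammar N P)
      (concat (map (expand_omega as ks) v)) (concat (map (expand_omega as ks) w))"
    using derives_context[OF omega_production_expands] by (simp add: expand_omega_def)
  with step.IH show ?case by (rule derives_trans)
qed simp

lemma omega_word_imp_star_concat:
  assumes "[0..<length as] \<in> Lang (omega_grammar N P as) S"
  shows "star_concat as \<subseteq> Lang (eps_closure_grammar N P) S"
proof
  fix z assume "z \<in> star_concat as"
  then obtain ks where ks: "length ks = length as" and z: "z = blocks as 0 ks"
    by (auto simp: star_concat_blocks)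
  have "derives (eps_closure_grammar N P) [Nt S] (concat (map (expand_omega as ks \<circ> Tm) [0..<length as]))"
    using derives_omega_expand[of N P as "[Nt S]" "map Tm [0..<length as]" ks] assms by (simp add: Lang_def expand_omega_def)
  also have "concat (map (expand_omega as ks \<circ> Tm) [0..<length as]) = map Tm z"
    using expand_omega_upt[of as ks 0 "length ks"] ks[symmetric] z by (simp add: map_nth)
  finally show "z \<in> Lang (eps_closure_grammar N P) S" by (simp add: Lang_def)
qed

lemma sublist_append_cases:
  assumes "sublist z (u @ v)"
  obtains "sublist z u" | "sublist z v"
    | z1 z2 where "z = z1 @ z2" "z1 \<noteq> []" "z2 \<noteq> []" "suffix z1 u" "prefix z2 v"
  using assms unfolding sublist_append
  by (metis append_Nil append_Nil2 prefix_imp_sublist suffix_imp_sublist)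

lemma card_Diff_insert_Suc:
  assumes "finite N" "A \<in> N" "A \<notin> V"
  shows "card (N - V) = Suc (card (N - insert A V))"
proof -
  have "A \<in> N - V" using assms(2,3) by blast
  then have "0 < card (N - V)" using assms(1) by (auto simp: card_gt_0_iff)
  then show ?thesis using assms(2,3) by simp
qed

section \<open>The \<epsilon>-closure G'\<close>

locale binary_grammar =
  fixes N :: "'n set" and P :: "('n, 't) prod set"
  assumes production_form: "(A, rhs) \<in> P \<Longrightarrow> A \<in> N \<and>
    ((\<exists>B C. B \<in> N \<and> C \<in> N \<and> rhs = [Nt B, Nt C]) \<or> (\<exists>a. rhs = [Tm a]) \<or> rhs = [])"
begin

abbreviation P' :: "('n, 't) prod set" where
  "P' \<equiv> eps_closure_grammar N P"

lemma eps_closure_eps: "A \<in> N \<Longrightarrow> (A, []) \<in> P'"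
  by (simp add: eps_closure_grammar_def)

lemma eps_closure_lhs: "(A, rhs) \<in> P' \<Longrightarrow> A \<in> N"
  unfolding eps_closure_grammar_def using production_form by blast

lemma eps_closure_binary: "(A, [Nt B, Nt C]) \<in> P' \<Longrightarrow> (A, [Nt B, Nt C]) \<in> P \<and> B \<in> N \<and> C \<in> N"
  unfolding eps_closure_grammar_def using production_form by fastforce

lemma eps_closure_terminal: "(A, [Tm a]) \<in> P' \<Longrightarrow> (A, [Tm a]) \<in> P"
  unfolding eps_closure_grammar_def by blast

lemma binary_form_P: "binary_form P"
  unfolding binary_form_def using production_form by blast

lemma binary_form_eps_closure: "binary_form P'"
  unfolding binary_form_def eps_closure_grammar_def using production_form by blast

lemma derives_eps_closure_left_child:
  assumes "(A, [Nt B, Nt C]) \<in> P'"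
  shows "derives P' [Nt A] [Nt B]"
  using eps_closure_binary[OF assms] by (simp add: derives_drop_right[OF assms] eps_closure_eps)

lemma derives_eps_closure_right_child:
  assumes "(A, [Nt B, Nt C]) \<in> P'"
  shows "derives P' [Nt A] [Nt C]"
  using eps_closure_binary[OF assms] by (simp add: derives_drop_left[OF assms] eps_closure_eps)

lemma generates_eps_closure_subseq: "generates P' A w \<Longrightarrow> subseq u w \<Longrightarrow> generates P' A u"
proof (induction arbitrary: u rule: generates.induct)
  case (generates_eps A)
  then have "u = []" by simp
  with generates_eps.hyps show ?case by (simp add: generates.generates_eps)
next
  case (generates_tm A a)
  then have "u = [] \<or> u = [a]"
    by (cases u) (auto simp: subseq_Cons2_iff split: if_splits)
  moreover have "generates P' A []"
    using eps_closure_lhs[OF generates_tm.hyps] by (intro generates.generates_eps eps_closure_eps)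
  ultimately show ?case using generates.generates_tm[OF generates_tm.hyps] by blast
next
  case (generates_bin A B C v1 v2)
  from \<open>subseq u (v1 @ v2)\<close> obtain x y where "u = x @ y" "subseq x v1" "subseq y v2"
    by (auto elim: subseq_appendE)
  with generates_bin.IH show ?case by (simp add: generates.generates_bin[OF generates_bin.hyps(1)])
qed

lemma generates_letter: "generates P' A w \<Longrightarrow> a \<in> set w \<Longrightarrow> derives P' [Nt A] [Tm a]"
  using generates_eps_closure_subseq[of A w "[a]"] generates_imp_derives[of P' A "[a]"]
  by (simp add: subseq_singleton_left)

lemma generates_eps_closure_lift:
  assumes productive: "\<forall>A \<in> N. productive P A"
  shows "generates P' A w \<Longrightarrow> \<exists>w'. generates P A w' \<and> subseq w w'"
proof (induction rule: generates.induct)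
  case (generates_eps A)
  then have "(A, []) \<in> P \<or> A \<in> N" unfolding eps_closure_grammar_def by blast
  then show ?case
  proof
    assume "(A, []) \<in> P"
    then have "generates P A []" by (rule generates.generates_eps)
    then show ?thesis by blast
  next
    assume "A \<in> N"
    then show ?thesis
      using productive unfolding productive_def derives_iff_generates[OF binary_form_P] by blast
  qed
next
  case (generates_tm A a)
  then have "generates P A [a]" by (intro generates.generates_tm eps_closure_terminal)
  then show ?case by blast
next
  case (generates_bin A B C u v)
  then obtain u' v' where "generates P B u'" "subseq u u'" "generates P C v'" "subseq v v'" by blast
  moreover have "(A, [Nt B, Nt C]) \<in> P" using eps_closure_binary[OF generates_bin.hyps(1)] by blast
  ultimately have "generates P A (u' @ v')" and "subseq (u @ v) (u' @ v')"
    by (simp_all add: generates.generates_bin list_emb_append_mono)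
  then show ?case by blast
qed

lemma Lang_eps_closure:
  assumes "\<forall>A \<in> N. productive P A"
  shows "Lang P' S = down_closure (Lang P S)"
proof
  show "Lang P' S \<subseteq> down_closure (Lang P S)"
  proof
    fix u assume "u \<in> Lang P' S"
    then have "generates P' S u" by (simp add: Lang_iff_generates[OF binary_form_eps_closure])
    then obtain w where "generates P S w" "subseq u w"
      using generates_eps_closure_lift[OF assms] by blast
    then show "u \<in> down_closure (Lang P S)"
      by (auto simp: down_closure_def Lang_iff_generates[OF binary_form_P])
  qed
  show "down_closure (Lang P S) \<subseteq> Lang P' S"
  proof
    fix u assume "u \<in> down_closure (Lang P S)"
    then obtain w where w: "generates P S w" and uw: "subseq u w"
      by (auto simp: down_closure_def Lang_iff_generates[OF binary_form_P])
    have "P \<subseteq> P'" by (auto simp: eps_closure_grammar_def)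
    with w have "generates P' S w" by (rule generates_mono)
    then have "generates P' S u" using uw by (rule generates_eps_closure_subseq)
    then show "u \<in> Lang P' S" by (simp add: Lang_iff_generates[OF binary_form_eps_closure])
  qed
qed

end

section \<open>Pumping long blocks into G^\<omega>\<close>

locale omega_setting = binary_grammar N P for N :: "'n set" and P :: "('n, 't) prod set" +
  fixes as :: "'t list"
begin

abbreviation P\<omega> :: "('n, nat) prod set" where
  "P\<omega> \<equiv> omega_grammar N P as"

lemma omega_eps: "A \<in> N \<Longrightarrow> (A, []) \<in> P\<omega>"
  unfolding omega_grammar_def using eps_closure_eps[of A] by (auto intro: exI[of _ "[]"])

lemma omega_binary: "(A, [Nt B, Nt C]) \<in> P' \<Longrightarrow> (A, [Nt B, Nt C]) \<in> P\<omega>"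
  unfolding omega_grammar_def by (rule UnI1, rule UnI1) (auto intro: exI[of _ "[B, C]"])

lemma omega_left_loop:
  "A \<in> N \<Longrightarrow> i < length as \<Longrightarrow> derives P' [Nt A] [Tm (as ! i), Nt A] \<Longrightarrow> (A, [Tm i, Nt A]) \<in> P\<omega>"
  unfolding omega_grammar_def Lset_def by blast

lemma omega_right_loop:
  "A \<in> N \<Longrightarrow> i < length as \<Longrightarrow> derives P' [Nt A] [Nt A, Tm (as ! i)] \<Longrightarrow> (A, [Nt A, Tm i]) \<in> P\<omega>"
  unfolding omega_grammar_def Rset_def by blast

lemma derives_omega_left_child:
  assumes prod: "(A, [Nt B, Nt C]) \<in> P'" and "derives P\<omega> [Nt B] W"
  shows "derives P\<omega> [Nt A] W"
proof -
  have "derives P\<omega> [Nt A] [Nt B]"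
    using eps_closure_binary[OF prod]
    by (simp add: derives_drop_right[OF omega_binary[OF prod]] omega_eps)
  then show ?thesis using assms(2) by (rule derives_trans)
qed

lemma derives_omega_right_child:
  assumes prod: "(A, [Nt B, Nt C]) \<in> P'" and "derives P\<omega> [Nt C] W"
  shows "derives P\<omega> [Nt A] W"
proof -
  have "derives P\<omega> [Nt A] [Nt C]"
    using eps_closure_binary[OF prod]
    by (simp add: derives_drop_left[OF omega_binary[OF prod]] omega_eps)
  then show ?thesis using assms(2) by (rule derives_trans)
qed

lemma derives_omega_children:
  assumes "(A, [Nt B, Nt C]) \<in> P'" and "derives P\<omega> [Nt B] W1" and "derives P\<omega> [Nt C] W2"
  shows "derives P\<omega> [Nt A] (W1 @ W2)"
proof -
  have "derives P\<omega> [Nt A] ([Nt B] @ [Nt C])" using omega_binary[OF assms(1)] by (simp add: derives_prod)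
  also have "derives P\<omega> \<dots> (W1 @ W2)" using assms(2,3) by (rule derives_append)
  finally show ?thesis .
qed

text \<open>V collects the ancestors of the current node A recorded at cuts of the first
  (for right_reach: the last) block.\<close>

definition left_reach :: "'n set \<Rightarrow> 't \<Rightarrow> 'n \<Rightarrow> bool" where
  "left_reach V a A \<longleftrightarrow> V \<subseteq> N \<and> (\<forall>D \<in> V. derives P' [Nt D] [Tm a, Nt A])"

definition right_reach :: "'n set \<Rightarrow> 't \<Rightarrow> 'n \<Rightarrow> bool" where
  "right_reach V a A \<longleftrightarrow> V \<subseteq> N \<and> (\<forall>D \<in> V. derives P' [Nt D] [Nt A, Tm a])"

lemma left_reach_derives: "left_reach V a A \<Longrightarrow> derives P' [Nt A] [Nt B] \<Longrightarrow> left_reach V a B"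
  unfolding left_reach_def
  using derives_context[of P' "[Nt A]" "[Nt B]" "[Tm a]" "[]"] derives_trans by fastforce

lemma right_reach_derives: "right_reach V a A \<Longrightarrow> derives P' [Nt A] [Nt B] \<Longrightarrow> right_reach V a B"
  unfolding right_reach_def
  using derives_context[of P' "[Nt A]" "[Nt B]" "[]" "[Tm a]"] derives_trans by fastforce

lemma left_reach_insert:
  assumes "left_reach V a A" "A \<in> N" "derives P' [Nt A] [Tm a, Nt B]" "derives P' [Nt A] [Nt B]"
  shows "left_reach (insert A V) a B"
  using left_reach_derives[OF assms(1,4)] assms(2,3) unfolding left_reach_def by blast

lemma right_reach_insert:
  assumes "right_reach V a A" "A \<in> N" "derives P' [Nt A] [Nt B, Tm a]" "derives P' [Nt A] [Nt B]"
  shows "right_reach (insert A V) a B"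
  using right_reach_derives[OF assms(1,4)] assms(2,3) unfolding right_reach_def by blast

definition pumping_bound :: "nat \<Rightarrow> nat" where
  "pumping_bound d = (2 * 4 ^ card N) ^ d"

definition omega_pumps :: "nat \<Rightarrow> bool" where
  "omega_pumps d \<longleftrightarrow> (\<forall>A w i ms. A \<in> N \<longrightarrow> generates P' A w \<longrightarrow> sublist (blocks as i ms) w \<longrightarrow>
     length ms = d \<longrightarrow> i + d \<le> length as \<longrightarrow> (\<forall>m \<in> set ms. pumping_bound d \<le> m) \<longrightarrow>
     derives P\<omega> [Nt A] (map Tm [i..<i + d]))"

end

locale pumping_stage = omega_setting N P as
  for N :: "'n set" and P :: "('n, 't) prod set" and as :: "'t list" +
  fixes d G :: nat
  assumes finite_N: "finite N"
    and stage_pos: "0 < d"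
    and smaller_stages: "\<And>d'. d' < d \<Longrightarrow> omega_pumps d'"
    and G_bound: "\<And>d'. d' < d \<Longrightarrow> 2 * pumping_bound d' \<le> G"
begin

lemma derives_omega_smaller:
  assumes "d' < d" "A \<in> N" "generates P' A w" "sublist (blocks as i ms) w" "length ms = d'"
    "i + d' \<le> length as" and big: "\<forall>m \<in> set ms. G \<le> 2 * m"
  shows "derives P\<omega> [Nt A] (map Tm [i..<i + d'])"
proof -
  have "\<forall>m \<in> set ms. pumping_bound d' \<le> m" using big G_bound[OF assms(1)] by fastforce
  with smaller_stages[OF assms(1)] assms(2-6) show ?thesis unfolding omega_pumps_def by blast
qed

lemma derives_omega_left_loop:
  assumes loop: "derives P' [Nt A] [Tm (as ! i), Nt A]" and A: "A \<in> N" and gen: "generates P' A w"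
    and sub: "sublist (blocks as i ms) w" and len: "length ms = d" and idx: "i + d \<le> length as"
    and big: "\<forall>m \<in> set ms. G \<le> m"
  shows "derives P\<omega> [Nt A] (map Tm [i..<i + d])"
proof -
  obtain m ms' where ms: "ms = m # ms'" using len stage_pos by (cases ms) auto
  have "sublist (blocks as (Suc i) ms') w"
    using sub ms by (auto intro: sublist_order.order.trans[OF sublist_append_leftI])
  moreover have "\<forall>m \<in> set ms'. G \<le> 2 * m" using big ms by auto
  ultimately have "derives P\<omega> [Nt A] (map Tm [Suc i..<Suc i + (d - 1)])"
    using derives_omega_smaller[of "d - 1" A w "Suc i" ms'] stage_pos A gen len idx ms by simp
  then have rest: "derives P\<omega> [Nt A] (map Tm [Suc i..<i + d])" using stage_pos by simp
  have "derives P\<omega> [Nt A] ([Tm i] @ [Nt A] @ [])"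
    using omega_left_loop[OF A _ loop] idx stage_pos by (simp add: derives_prod)
  also have "derives P\<omega> \<dots> ([Tm i] @ map Tm [Suc i..<i + d] @ [])"
    using rest by (rule derives_context)
  finally show ?thesis using stage_pos by (simp add: upt_conv_Cons)
qed

lemma derives_omega_right_loop:
  assumes loop: "derives P' [Nt A] [Nt A, Tm (as ! (i + d - 1))]" and A: "A \<in> N"
    and gen: "generates P' A w" and sub: "sublist (blocks as i ms) w" and len: "length ms = d"
    and idx: "i + d \<le> length as" and big: "\<forall>m \<in> set ms. G \<le> m"
  shows "derives P\<omega> [Nt A] (map Tm [i..<i + d])"
proof -
  obtain ms' m where ms: "ms = ms' @ [m]" using len stage_pos by (cases ms rule: rev_exhaust) auto
  have "sublist (blocks as i ms') w"
    using sub ms by (auto simp: blocks_append intro: sublist_order.order.trans[OF sublist_append_rightI])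
  moreover have "\<forall>m \<in> set ms'. G \<le> 2 * m" using big ms by auto
  ultimately have rest: "derives P\<omega> [Nt A] (map Tm [i..<i + (d - 1)])"
    using derives_omega_smaller[of "d - 1" A w i ms'] stage_pos A gen len idx ms by simp
  have "derives P\<omega> [Nt A] ([] @ [Nt A] @ [Tm (i + d - 1)])"
    using omega_right_loop[OF A _ loop] idx stage_pos by (simp add: derives_prod)
  also have "derives P\<omega> \<dots> ([] @ map Tm [i..<i + (d - 1)] @ [Tm (i + d - 1)])"
    using rest by (rule derives_context)
  finally have "derives P\<omega> [Nt A] (map Tm [i..<i + (d - 1)] @ [Tm (i + d - 1)])" by simp
  moreover have "map Tm [i..<i + d] = map Tm [i..<i + (d - 1)] @ [Tm (i + d - 1)]"
    using stage_pos by (cases d) auto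
  ultimately show ?thesis by metis
qed

lemma derives_omega_split:
  assumes prod: "(A, [Nt B, Nt C]) \<in> P'" and "generates P' B u" "generates P' C v"
    and "sublist (blocks as i msB) u" "sublist (blocks as (i + length msB) msC) v"
    and "msB \<noteq> []" "msC \<noteq> []" and d: "length msB + length msC = d" and "i + d \<le> length as"
    and big: "\<forall>m \<in> set (msB @ msC). G \<le> 2 * m"
  shows "derives P\<omega> [Nt A] (map Tm [i..<i + d])"
proof -
  have "B \<in> N" "C \<in> N" using eps_closure_binary[OF prod] by auto
  have "derives P\<omega> [Nt B] (map Tm [i..<i + length msB])"
    by (rule derives_omega_smaller) (use assms \<open>B \<in> N\<close> in auto)
  moreover have "derives P\<omega> [Nt C] (map Tm [i + length msB..<i + length msB + length msC])"
    by (rule derives_omega_smaller) (use assms \<open>C \<in> N\<close> in auto)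
  ultimately have "derives P\<omega> [Nt A] (map Tm ([i..<i + length msB] @ [i + length msB..<i + d]))"
    using derives_omega_children[OF prod] d by (simp add: add.assoc)
  moreover have "[i..<i + d] = [i..<i + length msB] @ [i + length msB..<i + d]"
    using d upt_add_eq_append[of i "i + length msB" "length msC"] by (simp add: add.assoc)
  ultimately show ?thesis by simp
qed

text \<open>Every nonterminal not yet recorded may still halve the first or the last block, which
  the factor 2 ^ (card (N - VL) + card (N - VR)) pays for.\<close>

definition pumps_at :: "'n \<Rightarrow> 't list \<Rightarrow> bool" where
  "pumps_at A w \<longleftrightarrow> (\<forall>i ms VL VR. A \<in> N \<longrightarrow> sublist (blocks as i ms) w \<longrightarrow> length ms = d \<longrightarrow>
     i + d \<le> length as \<longrightarrow> left_reach VL (as ! i) A \<longrightarrow> right_reach VR (as ! (i + d - 1)) A \<longrightarrow>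
     (\<forall>m \<in> set ms. 2 ^ (card (N - VL) + card (N - VR)) * G \<le> m) \<longrightarrow>
     derives P\<omega> [Nt A] (map Tm [i..<i + d]))"

lemma pumps_at_short:
  assumes "length w < 2"
  shows "pumps_at A w"
  unfolding pumps_at_def
proof (intro allI impI)
  fix i ms VL VR
  assume sub: "sublist (blocks as i ms) w" and len: "length ms = d"
    and big: "\<forall>m \<in> set ms. 2 ^ (card (N - VL) + card (N - VR)) * G \<le> m"
  obtain m ms' where ms: "ms = m # ms'" using len stage_pos by (cases ms) auto
  have "2 \<le> G" using G_bound[OF stage_pos] by (simp add: pumping_bound_def)
  also have "G \<le> 2 ^ (card (N - VL) + card (N - VR)) * G" by simp
  also have "\<dots> \<le> m" using big ms by simp
  also have "m \<le> length (blocks as i ms)" using ms by simp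
  also have "\<dots> \<le> length w" using sub by (rule sublist_length_le)
  finally show "derives P\<omega> [Nt A] (map Tm [i..<i + d])" using assms by simp
qed

lemma pumps_atD:
  assumes "pumps_at A w" "A \<in> N" "sublist (blocks as i ms) w" "length ms = d" "i + d \<le> length as"
    "left_reach VL (as ! i) A" "right_reach VR (as ! (i + d - 1)) A"
    "\<forall>m \<in> set ms. 2 ^ (card (N - VL) + card (N - VR)) * G \<le> m"
  shows "derives P\<omega> [Nt A] (map Tm [i..<i + d])"
  using assms unfolding pumps_at_def by blast

context
  fixes A B C u v i ms VL VR
  assumes prod: "(A, [Nt B, Nt C]) \<in> P'"
    and gen_B: "generates P' B u" and gen_C: "generates P' C v"
    and pumps_B: "pumps_at B u" and pumps_C: "pumps_at C v"
    and A_N: "A \<in> N" and len: "length ms = d" and idx: "i + d \<le> length as"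
    and reach_L: "left_reach VL (as ! i) A" and reach_R: "right_reach VR (as ! (i + d - 1)) A"
    and bound: "\<forall>m \<in> set ms. 2 ^ (card (N - VL) + card (N - VR)) * G \<le> m"
begin

lemma derives_omega_cut_last_block:
  assumes "A \<notin> VR" and sub: "suffix (blocks as i ms') u" and len': "length ms' = d"
    and letter: "as ! (i + d - 1) \<in> set v"
    and big: "\<forall>m \<in> set ms'. 2 ^ (card (N - VL) + card (N - VR)) * G \<le> 2 * m"
  shows "derives P\<omega> [Nt A] (map Tm [i..<i + d])"
proof -
  let ?a = "as ! (i + d - 1)"
  have B_N: "B \<in> N" using eps_closure_binary[OF prod] by blast
  have to_B: "derives P' [Nt A] [Nt B]" using prod by (rule derives_eps_closure_left_child)
  have "derives P' [Nt A] ([Nt B] @ [Nt C] @ [])" using prod by (simp add: derives_prod)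
  also have "derives P' \<dots> ([Nt B] @ [Tm ?a] @ [])"
    using generates_letter[OF gen_C letter] by (rule derives_context)
  finally have "right_reach (insert A VR) ?a B"
    using right_reach_insert[OF reach_R A_N _ to_B] by simp
  moreover have "card (N - VR) = Suc (card (N - insert A VR))"
    using finite_N A_N \<open>A \<notin> VR\<close> by (rule card_Diff_insert_Suc)
  then have "\<forall>m \<in> set ms'. 2 ^ (card (N - VL) + card (N - insert A VR)) * G \<le> m"
    using big by auto
  ultimately have "derives P\<omega> [Nt B] (map Tm [i..<i + d])"
    using pumps_atD[OF pumps_B B_N suffix_imp_sublist[OF sub] len' idx left_reach_derives[OF reach_L to_B]]
    by blast
  then show ?thesis by (rule derives_omega_left_child[OF prod])
qed

lemma derives_omega_cut_first_block:
  assumes "A \<notin> VL" and sub: "prefix (blocks as i ms') v" and len': "length ms' = d"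
    and letter: "as ! i \<in> set u"
    and big: "\<forall>m \<in> set ms'. 2 ^ (card (N - VL) + card (N - VR)) * G \<le> 2 * m"
  shows "derives P\<omega> [Nt A] (map Tm [i..<i + d])"
proof -
  let ?a = "as ! i"
  have C_N: "C \<in> N" using eps_closure_binary[OF prod] by blast
  have to_C: "derives P' [Nt A] [Nt C]" using prod by (rule derives_eps_closure_right_child)
  have "derives P' [Nt A] ([] @ [Nt B] @ [Nt C])" using prod by (simp add: derives_prod)
  also have "derives P' \<dots> ([] @ [Tm ?a] @ [Nt C])"
    using generates_letter[OF gen_B letter] by (rule derives_context)
  finally have "left_reach (insert A VL) ?a C"
    using left_reach_insert[OF reach_L A_N _ to_C] by simp
  moreover have "card (N - VL) = Suc (card (N - insert A VL))"
    using finite_N A_N \<open>A \<notin> VL\<close> by (rule card_Diff_insert_Suc)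
  then have "\<forall>m \<in> set ms'. 2 ^ (card (N - insert A VL) + card (N - VR)) * G \<le> m"
    using big by auto
  ultimately have "derives P\<omega> [Nt C] (map Tm [i..<i + d])"
    using pumps_atD[OF pumps_C C_N prefix_imp_sublist[OF sub] len' idx _ right_reach_derives[OF reach_R to_C]]
    by blast
  then show ?thesis by (rule derives_omega_right_child[OF prod])
qed

lemma derives_omega_cut_left_heavy:
  assumes "A \<notin> VR" and ms: "ms = ms1 @ (p + q) # ms2" and "q \<le> p"
    and u_blocks: "suffix (blocks as i (ms1 @ [p])) u"
    and v_blocks: "prefix (blocks as (i + length ms1) (q # ms2)) v"
    and nonempty: "blocks as (i + length ms1) (q # ms2) \<noteq> []"
  shows "derives P\<omega> [Nt A] (map Tm [i..<i + d])"
proof -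
  let ?c = "card (N - VL) + card (N - VR)"
  have d: "d = length ms1 + Suc (length ms2)" using len ms by simp
  have big: "\<forall>m \<in> set (ms1 @ [p] @ ms2). 2 ^ ?c * G \<le> 2 * m"
  proof
    fix m assume "m \<in> set (ms1 @ [p] @ ms2)"
    then have "m = p \<or> 2 ^ ?c * G \<le> m" using bound ms by auto
    then show "2 ^ ?c * G \<le> 2 * m" using bound ms \<open>q \<le> p\<close> by auto
  qed
  show ?thesis
  proof (cases "ms2 = []")
    case True
    with nonempty have "as ! (i + d - 1) \<in> set v"
      using set_mono_prefix[OF v_blocks] d by auto
    then show ?thesis
      using derives_omega_cut_last_block[OF \<open>A \<notin> VR\<close> u_blocks] d True big by simp
  next
    case False
    have G_le: "G \<le> 2 ^ ?c * G" by simp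
    have "\<forall>m \<in> set ((ms1 @ [p]) @ ms2). G \<le> 2 * m" using big by (auto intro: order_trans[OF G_le])
    moreover have "sublist (blocks as (i + length (ms1 @ [p])) ms2) v"
      using prefix_imp_sublist[OF v_blocks]
      by (auto intro: sublist_order.order.trans[OF sublist_append_leftI])
    ultimately show ?thesis
      using derives_omega_split[OF prod gen_B gen_C suffix_imp_sublist[OF u_blocks]] False d idx
      by simp
  qed
qed

lemma derives_omega_cut_right_heavy:
  assumes "A \<notin> VL" and ms: "ms = ms1 @ (p + q) # ms2" and "p < q"
    and u_blocks: "suffix (blocks as i (ms1 @ [p])) u"
    and v_blocks: "prefix (blocks as (i + length ms1) (q # ms2)) v"
    and nonempty: "blocks as i (ms1 @ [p]) \<noteq> []"
  shows "derives P\<omega> [Nt A] (map Tm [i..<i + d])"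
proof -
  let ?c = "card (N - VL) + card (N - VR)"
  have d: "d = length ms1 + Suc (length ms2)" using len ms by simp
  have big: "\<forall>m \<in> set (ms1 @ [q] @ ms2). 2 ^ ?c * G \<le> 2 * m"
  proof
    fix m assume "m \<in> set (ms1 @ [q] @ ms2)"
    then have "m = q \<or> 2 ^ ?c * G \<le> m" using bound ms by auto
    then show "2 ^ ?c * G \<le> 2 * m" using bound ms \<open>p < q\<close> by auto
  qed
  show ?thesis
  proof (cases "ms1 = []")
    case True
    with nonempty have "as ! i \<in> set u"
      using set_mono_suffix[OF u_blocks] by auto
    moreover have "prefix (blocks as i (q # ms2)) v" using v_blocks True by simp
    ultimately show ?thesis
      using derives_omega_cut_first_block[OF \<open>A \<notin> VL\<close>, of "q # ms2"] d True big by simp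
  next
    case False
    have G_le: "G \<le> 2 ^ ?c * G" by simp
    have "\<forall>m \<in> set (ms1 @ q # ms2). G \<le> 2 * m" using big by (auto intro: order_trans[OF G_le])
    moreover have "sublist (blocks as i ms1) u"
      using suffix_imp_sublist[OF u_blocks]
      by (auto simp: blocks_append intro: sublist_order.order.trans[OF sublist_append_rightI])
    ultimately show ?thesis
      using derives_omega_split[OF prod gen_B gen_C _ prefix_imp_sublist[OF v_blocks]] False d idx
      by simp
  qed
qed

lemma derives_omega_cut:
  assumes "A \<notin> VL" "A \<notin> VR" and cut: "blocks as i ms = z1 @ z2" and "z1 \<noteq> []" "z2 \<noteq> []"
    and "suffix z1 u" "prefix z2 v"
  shows "derives P\<omega> [Nt A] (map Tm [i..<i + d])"
proof -
  obtain ms1 p q ms2 where ms: "ms = ms1 @ (p + q) # ms2"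
    and z1: "z1 = blocks as i (ms1 @ [p])" and z2: "z2 = blocks as (i + length ms1) (q # ms2)"
    using blocks_cut[OF cut \<open>z2 \<noteq> []\<close>] by blast
  show ?thesis
  proof (cases "q \<le> p")
    case True
    then show ?thesis using derives_omega_cut_left_heavy[OF \<open>A \<notin> VR\<close> ms] z1 z2 assms(4-7) by simp
  next
    case False
    then show ?thesis using derives_omega_cut_right_heavy[OF \<open>A \<notin> VL\<close> ms] z1 z2 assms(4-7) by simp
  qed
qed

lemma derives_omega_node:
  assumes sub: "sublist (blocks as i ms) (u @ v)"
  shows "derives P\<omega> [Nt A] (map Tm [i..<i + d])"
proof -
  have "G \<le> 2 ^ (card (N - VL) + card (N - VR)) * G" by simp
  with bound have big: "\<forall>m \<in> set ms. G \<le> m" using order_trans by blast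
  have gen_A: "generates P' A (u @ v)" using prod gen_B gen_C by (rule generates.generates_bin)
  consider (loop_L) "A \<in> VL" | (loop_R) "A \<in> VR" | (no_loop) "A \<notin> VL" "A \<notin> VR" by blast
  then show ?thesis
  proof cases
    case loop_L
    then have "derives P' [Nt A] [Tm (as ! i), Nt A]" using reach_L unfolding left_reach_def by blast
    then show ?thesis using derives_omega_left_loop A_N gen_A sub len idx big by blast
  next
    case loop_R
    then have "derives P' [Nt A] [Nt A, Tm (as ! (i + d - 1))]"
      using reach_R unfolding right_reach_def by blast
    then show ?thesis using derives_omega_right_loop A_N gen_A sub len idx big by blast
  next
    case no_loop
    from sub show ?thesis
    proof (cases rule: sublist_append_cases)
      case 1
      have "derives P' [Nt A] [Nt B]" using prod by (rule derives_eps_closure_left_child)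
      then have "derives P\<omega> [Nt B] (map Tm [i..<i + d])"
        using pumps_atD[OF pumps_B _ 1 len idx] eps_closure_binary[OF prod] bound
          left_reach_derives[OF reach_L] right_reach_derives[OF reach_R] by blast
      then show ?thesis by (rule derives_omega_left_child[OF prod])
    next
      case 2
      have "derives P' [Nt A] [Nt C]" using prod by (rule derives_eps_closure_right_child)
      then have "derives P\<omega> [Nt C] (map Tm [i..<i + d])"
        using pumps_atD[OF pumps_C _ 2 len idx] eps_closure_binary[OF prod] bound
          left_reach_derives[OF reach_L] right_reach_derives[OF reach_R] by blast
      then show ?thesis by (rule derives_omega_right_child[OF prod])
    next
      case (3 z1 z2)
      then show ?thesis using derives_omega_cut no_loop by blast
    qed
  qed
qed

end

lemma pumps_at_generates: "generates P' A w \<Longrightarrow> pumps_at A w"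
proof (induction rule: generates.induct)
  case (generates_bin A B C u v)
  show ?case
    unfolding pumps_at_def
    by (intro allI impI, rule derives_omega_node[OF generates_bin.hyps generates_bin.IH]; assumption)
qed (simp_all add: pumps_at_short)

end

context omega_setting
begin

lemma pumping_bound_Suc: "pumping_bound (Suc d) = 2 ^ (card N + card N) * (2 * pumping_bound d)"
proof -
  have "(4::nat) ^ card N = 2 ^ (card N + card N)"
    by (simp add: power_add power_mult_distrib[symmetric])
  then show ?thesis by (simp add: pumping_bound_def)
qed

lemma pumping_bound_mono: "d' \<le> d \<Longrightarrow> pumping_bound d' \<le> pumping_bound d"
  unfolding pumping_bound_def by (rule power_increasing) simp_all

lemma omega_pumps_all:
  assumes "finite N"
  shows "omega_pumps d"
proof (induction d rule: less_induct)
  case (less d)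
  show ?case
  proof (cases d)
    case 0
    then show ?thesis unfolding omega_pumps_def by (simp add: derives_prod omega_eps)
  next
    case (Suc d0)
    have "\<And>d'. d' < d \<Longrightarrow> 2 * pumping_bound d' \<le> 2 * pumping_bound d0"
      using Suc by (simp add: pumping_bound_mono)
    then interpret stage: pumping_stage N P as d "2 * pumping_bound d0"
      using assms less Suc by unfold_locales auto
    show ?thesis unfolding omega_pumps_def
    proof (intro allI impI)
      fix A w i ms
      assume "A \<in> N" "generates P' A w" "sublist (blocks as i ms) w" "length ms = d"
        "i + d \<le> length as" "\<forall>m \<in> set ms. pumping_bound d \<le> m"
      then show "derives P\<omega> [Nt A] (map Tm [i..<i + d])"
        using stage.pumps_atD[OF stage.pumps_at_generates, of A w i ms "{}" "{}"] Suc
        by (simp add: left_reach_def right_reach_def pumping_bound_Suc)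
    qed
  qed
qed

lemma star_concat_imp_omega_word:
  assumes "finite N" and "S \<in> N" and "star_concat as \<subseteq> Lang P' S"
  shows "[0..<length as] \<in> Lang P\<omega> S"
proof -
  define ks where "ks = replicate (length as) (pumping_bound (length as))"
  have "blocks as 0 ks \<in> star_concat as" by (auto simp: star_concat_blocks ks_def)
  then have "blocks as 0 ks \<in> Lang P' S" using assms(3) by blast
  then have "generates P' S (blocks as 0 ks)" by (simp add: Lang_iff_generates[OF binary_form_eps_closure])
  then have "derives P\<omega> [Nt S] (map Tm [0..<0 + length as])"
    by (rule omega_pumps_all[OF assms(1), unfolded omega_pumps_def, rule_format, OF assms(2),
          where ms = ks]) (simp_all add: ks_def)
  then show ?thesis by (simp add: Lang_def)
qed

end

theorem mainTheorem11:
  fixes N :: "'n set" and P :: "('n, 't) prod set" and S :: 'n and as :: "'t list"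
  assumes distinct: "distinct as"
    and finN: "finite N" and finP: "finite P" and S_in: "S \<in> N"
    and prods: "\<forall>(A, rhs) \<in> P. A \<in> N \<and>
                   ((\<exists>B C. B \<in> N \<and> C \<in> N \<and> rhs = [Nt B, Nt C])
                    \<or> (\<exists>a \<in> set as. rhs = [Tm a])
                    \<or> rhs = [])"
    and prod_all: "\<forall>A \<in> N. productive P A"
    and incl: "Lang P S \<subseteq> star_concat as"
  shows "[0..<length as] \<in> Lang (omega_grammar N P as) S
         \<longleftrightarrow> star_concat as \<subseteq> down_closure (Lang P S)"
proof -
  interpret omega_setting N P as
    by unfold_locales (use prods in fastforce)
  have "down_closure (Lang P S) = Lang P' S" by (simp add: Lang_eps_closure[OF prod_all])
  then show ?thesis
    using omega_word_imp_star_concat[of as N P S] star_concat_imp_omega_word[OF finN S_in] by auto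
qed

end
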